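(* For every integer $n\ge 1$, the number of lines in $\mathbb{Z}_n^2$ equals $\psi(n^2)$, where $\psi:\mathbb{N}\to\mathbb{N}$ is the multiplicative function with $\psi(1)=1$ and $\psi(p^k)=(p+1)p^{k-1}$ for prime powers $p^k>1$.
   Context: $\mathbb{Z}_n=\mathbb{Z}/n\mathbb{Z}$. A line in $\mathbb{Z}_n^2$ is a translate (as a set) of a cyclic subgroup of order $n$ of the additive group $\mathbb{Z}_n^2$. A function $\psi$ is multiplicative if $\psi(1)=1$ and $\psi(nm)=\psi(n)\psi(m)$ for coprime $n,m$. *)

theory Defs
  imports "HOL-Computational_Algebra.Primes"
begin

text \<open>Z_n^2 is modelled as {0..<n} x {0..<n} with componentwise addition mod n.\<close>

definition cyc :: "nat \<Rightarrow> nat \<Rightarrow> nat \<Rightarrow> (nat \<times> nat) set" where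
  "cyc n a b = {(k * a mod n, k * b mod n) | k. True}"

definition lines :: "nat \<Rightarrow> (nat \<times> nat) set set" where
  "lines n = {L. \<exists>x y a b. x < n \<and> y < n \<and> a < n \<and> b < n \<and>
      card (cyc n a b) = n \<and>
      L = (\<lambda>(u, v). ((x + u) mod n, (y + v) mod n)) ` cyc n a b}"

definition psi :: "nat \<Rightarrow> nat" where
  "psi m = (\<Prod>p\<in>prime_factors m. (p + 1) * p ^ (multiplicity p m - 1))"

end

theory Submission
  imports Defs "HOL-Number_Theory.Number_Theory"
begin

text \<open>A line is a translate x + \<langle>v\<rangle> of the cyclic group generated by a vector v = (a, b) of
order n, and v has order n exactly when gcd(a, b, n) = 1. The map (x, v) \<mapsto> x + \<langle>v\<rangle> from
Z_n^2 times the vectors of order n onto the lines has as fibre over L the set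
L \<times> {generators of the direction of L}, of size n \<phi>(n). Hence
#lines \<cdot> n \<phi>(n) = n^2 J(n), where J(n) is the number of vectors of order n. By the Chinese
remainder theorem J is multiplicative with J(p^e) = p^(2e-2) (p^2 - 1), and comparing Euler
products gives n J(n) = \<psi>(n^2) \<phi>(n).\<close>

lemma card_eq_card_image_mult_fibre:
  assumes "finite A" and "\<And>x. x \<in> A \<Longrightarrow> card {y \<in> A. f y = f x} = k"
  shows "card A = card (f ` A) * k"
proof -
  have "card A = (\<Sum>z\<in>f ` A. card {y \<in> A. f y = z})"
    unfolding card_eq_sum by (rule sum.image_gen[OF assms(1)])
  also have "\<dots> = (\<Sum>z\<in>f ` A. k)"
    using assms(2) by (intro sum.cong) auto
  finally show ?thesis by simp
qed

subsection \<open>Cyclic subgroups of Z_n^2\<close>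

definition vadd :: "nat \<Rightarrow> nat \<times> nat \<Rightarrow> nat \<times> nat \<Rightarrow> nat \<times> nat" where
  "vadd n p q = ((fst p + fst q) mod n, (snd p + snd q) mod n)"

definition multiple :: "nat \<Rightarrow> nat \<Rightarrow> nat \<Rightarrow> nat \<Rightarrow> nat \<times> nat" where
  "multiple n a b k = (k * a mod n, k * b mod n)"

lemma vadd_assoc: "vadd n p (vadd n q r) = vadd n (vadd n p q) r"
  by (simp add: vadd_def mod_add_right_eq mod_add_left_eq add.assoc)

lemma vadd_zero_right: "p \<in> {..<n} \<times> {..<n} \<Longrightarrow> vadd n p (0, 0) = p"
  by (auto simp: vadd_def)

lemma vadd_mem_square: "n > 0 \<Longrightarrow> vadd n p q \<in> {..<n} \<times> {..<n}"
  by (simp add: vadd_def)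

lemma inj_on_vadd: "inj_on (vadd n p) ({..<n} \<times> {..<n})"
proof (rule inj_onI)
  fix u w
  assume u: "u \<in> {..<n} \<times> {..<n}" and w: "w \<in> {..<n} \<times> {..<n}"
    and "vadd n p u = vadd n p w"
  then have "[fst p + fst u = fst p + fst w] (mod n)" "[snd p + snd u = snd p + snd w] (mod n)"
    by (auto simp: vadd_def cong_def)
  then have "[fst u = fst w] (mod n)" "[snd u = snd w] (mod n)"
    by (auto simp: cong_add_lcancel_nat)
  with u w show "u = w"
    by (auto simp: cong_def prod_eq_iff)
qed

lemma vadd_multiple: "vadd n (multiple n a b k) (multiple n a b j) = multiple n a b (k + j)"
  by (simp add: vadd_def multiple_def mod_add_eq distrib_right)

lemma multiple_mod: "multiple n a b (k mod n) = multiple n a b k"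
  by (simp add: multiple_def mod_mult_left_eq)

lemma multiple_mult: "multiple n (j * a mod n) (j * b mod n) k = multiple n a b (k * j)"
  by (simp add: multiple_def mod_mult_right_eq mult.assoc)

lemma cyc_eq_range: "cyc n a b = range (multiple n a b)"
  by (auto simp: cyc_def multiple_def)

lemma cyc_eq_image:
  assumes "n > 0"
  shows "cyc n a b = multiple n a b ` {..<n}"
  unfolding cyc_eq_range
proof (intro subset_antisym subsetI)
  fix z
  assume "z \<in> range (multiple n a b)"
  then obtain k where "z = multiple n a b k"
    by blast
  then show "z \<in> multiple n a b ` {..<n}"
    using assms by (metis multiple_mod image_eqI lessThan_iff mod_less_divisor)
qed auto

lemma finite_cyc: "n > 0 \<Longrightarrow> finite (cyc n a b)"
  by (simp add: cyc_eq_image)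

lemma cyc_subset_square: "n > 0 \<Longrightarrow> cyc n a b \<subseteq> {..<n} \<times> {..<n}"
  by (auto simp: cyc_def)

lemma zero_in_cyc: "(0, 0) \<in> cyc n a b"
  using multiple_def[of n a b 0] by (simp add: cyc_eq_range) (metis rangeI)

lemma self_in_cyc: "a < n \<Longrightarrow> b < n \<Longrightarrow> (a, b) \<in> cyc n a b"
  using multiple_def[of n a b 1] by (simp add: cyc_eq_range) (metis rangeI)

lemma vadd_in_cyc: "h \<in> cyc n a b \<Longrightarrow> s \<in> cyc n a b \<Longrightarrow> vadd n h s \<in> cyc n a b"
  by (auto simp: cyc_eq_range vadd_multiple)

lemma cyc_subset_cyc: "(c, d) \<in> cyc n a b \<Longrightarrow> cyc n c d \<subseteq> cyc n a b"
  by (auto simp: cyc_eq_range multiple_def[of n a b] multiple_mult)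

subsection \<open>Vectors of order n\<close>

definition primitive_vectors :: "nat \<Rightarrow> (nat \<times> nat) set" where
  "primitive_vectors n = {(a, b). a < n \<and> b < n \<and> coprime (gcd a b) n}"

lemma finite_primitive_vectors: "finite (primitive_vectors n)"
  by (rule finite_subset[of _ "{..<n} \<times> {..<n}"]) (auto simp: primitive_vectors_def)

lemma coprime_gcd_mod_iff: "coprime (gcd (a mod m) (b mod m)) m \<longleftrightarrow> coprime (gcd a b) (m::nat)"
  by (simp add: coprime_def) (metis dvd_mod_iff)

lemma dvd_if_dvd_mult_gcd:
  fixes x :: int and a b n :: nat
  assumes "int n dvd x * int a" "int n dvd x * int b" "coprime (gcd a b) n"
  shows "int n dvd x"
proof -
  have "int n dvd gcd (x * int a) (x * int b)"
    using assms by simp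
  also have "gcd (x * int a) (x * int b) = \<bar>x\<bar> * int (gcd a b)"
    using gcd_mult_distrib_int[of x "int a" "int b"] by (simp add: gcd_int_int_eq)
  finally have "int n dvd x * int (gcd a b)"
    by (metis abs_mult abs_of_nat dvd_abs_iff)
  moreover have "coprime (int n) (int (gcd a b))"
    using assms(3) by (simp add: coprime_commute)
  ultimately show ?thesis
    using coprime_dvd_mult_left_iff by blast
qed

lemma inj_on_multiple:
  assumes "coprime (gcd a b) n"
  shows "inj_on (multiple n a b) {..<n}"
proof (rule inj_onI)
  fix k k'
  assume k: "k \<in> {..<n}" "k' \<in> {..<n}" and "multiple n a b k = multiple n a b k'"
  then have "(int k * int a) mod int n = (int k' * int a) mod int n"
    "(int k * int b) mod int n = (int k' * int b) mod int n"
    unfolding multiple_def by (simp_all flip: of_nat_mult of_nat_mod)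
  then have "int n dvd (int k - int k') * int a" "int n dvd (int k - int k') * int b"
    by (simp_all only: mod_eq_dvd_iff left_diff_distrib)
  then have dvd: "int n dvd int k - int k'"
    using assms by (rule dvd_if_dvd_mult_gcd)
  show "k = k'"
  proof (rule ccontr)
    assume "k \<noteq> k'"
    then have "int n \<le> \<bar>int k - int k'\<bar>"
      using dvd_imp_le_int[OF _ dvd] by simp
    with k show False
      by auto
  qed
qed

lemma coprime_if_inj_on_multiple:
  assumes n: "n > 0" and inj: "inj_on (multiple n a b) {..<n}"
  shows "coprime (gcd a b) n"
proof (rule ccontr)
  define g where "g = gcd (gcd a b) n"
  assume "\<not> coprime (gcd a b) n"
  then have "g \<noteq> 1"
    unfolding g_def using coprime_iff_gcd_eq_1 by blast
  moreover have "g > 0"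
    unfolding g_def using n by simp
  moreover have "g dvd n" "g dvd a" "g dvd b"
    unfolding g_def by (metis gcd_dvd1 gcd_dvd2 dvd_trans)+
  ultimately have "g \<ge> 2"
    by linarith
  obtain d where d: "n = g * d"
    using \<open>g dvd n\<close> by blast
  with n \<open>g \<ge> 2\<close> have "0 < d" "d < n"
    by auto
  obtain a' b' where "a = g * a'" "b = g * b'"
    using \<open>g dvd a\<close> \<open>g dvd b\<close> by blast
  with d have "multiple n a b d = multiple n a b 0"
    by (simp add: multiple_def mult.left_commute)
  then have "d = 0"
    by (rule inj_onD[OF inj]) (use n \<open>d < n\<close> in auto)
  with \<open>0 < d\<close> show False
    by simp
qed

lemma card_cyc_eq_iff:
  assumes n: "n > 0"
  shows "card (cyc n a b) = n \<longleftrightarrow> coprime (gcd a b) n"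
proof -
  have "card (cyc n a b) = n \<longleftrightarrow> inj_on (multiple n a b) {..<n}"
    by (simp add: cyc_eq_image[OF n] inj_on_iff_eq_card)
  then show ?thesis
    using inj_on_multiple coprime_if_inj_on_multiple[OF n] by blast
qed

lemma card_cyc: "n > 0 \<Longrightarrow> coprime (gcd a b) n \<Longrightarrow> card (cyc n a b) = n"
  by (simp add: card_cyc_eq_iff)

lemma cyc_eq_of_mem:
  assumes "n > 0" "coprime (gcd a b) n" "coprime (gcd c d) n" "(c, d) \<in> cyc n a b"
  shows "cyc n c d = cyc n a b"
  using assms by (intro card_subset_eq finite_cyc cyc_subset_cyc) (simp_all add: card_cyc)

lemma vadd_cyc_eq:
  assumes "n > 0" "coprime (gcd a b) n" "h \<in> cyc n a b"
  shows "vadd n h ` cyc n a b = cyc n a b"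
proof (rule card_subset_eq)
  show "vadd n h ` cyc n a b \<subseteq> cyc n a b"
    using assms(3) vadd_in_cyc by blast
  show "card (vadd n h ` cyc n a b) = card (cyc n a b)"
    using inj_on_subset[OF inj_on_vadd cyc_subset_square[OF assms(1)]] by (rule card_image)
qed (rule finite_cyc[OF assms(1)])

text \<open>Units are represented by totatives n \<subseteq> {1..n}, so the residue 0 appears as n; this
matters only for n = 1.\<close>

lemma primitive_vectors_inter_cyc:
  assumes n: "n > 0" and v: "coprime (gcd a b) n"
  shows "primitive_vectors n \<inter> cyc n a b = multiple n a b ` totatives n"
proof -
  have primitive_iff: "multiple n a b k \<in> primitive_vectors n \<longleftrightarrow> coprime k n" for k
  proof -
    have "multiple n a b k \<in> primitive_vectors n \<longleftrightarrow> coprime (gcd (k * a) (k * b)) n"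
      using n by (simp add: multiple_def primitive_vectors_def coprime_gcd_mod_iff)
    also have "\<dots> \<longleftrightarrow> coprime k n"
      using v by (simp flip: gcd_mult_distrib_nat)
    finally show ?thesis .
  qed
  have "multiple n a b k \<in> multiple n a b ` totatives n" if k: "coprime k n" for k
  proof (cases "k mod n = 0")
    case True
    with k n have "n = 1"
      using coprime_mod_left_iff[of n k] by simp
    then show ?thesis
      by (simp add: multiple_def)
  next
    case False
    with k n have "k mod n \<in> totatives n"
      by (simp add: in_totatives_iff order_less_imp_le)
    then show ?thesis
      by (metis image_eqI multiple_mod)
  qed
  then have "primitive_vectors n \<inter> range (multiple n a b) \<subseteq> multiple n a b ` totatives n"
    using primitive_iff by blast
  moreover have "multiple n a b ` totatives n \<subseteq> primitive_vectors n \<inter> range (multiple n a b)"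
    using primitive_iff by (auto simp: in_totatives_iff)
  ultimately show ?thesis
    by (simp add: cyc_eq_range)
qed

lemma inj_on_mod_totatives: "inj_on (\<lambda>k. k mod n) (totatives n)"
proof (rule inj_onI)
  fix k k'
  assume "k \<in> totatives n" "k' \<in> totatives n" "k mod n = k' mod n"
  then show "k = k'"
    by (cases "k = n"; cases "k' = n") (auto simp: in_totatives_iff)
qed

lemma card_primitive_vectors_inter_cyc:
  assumes n: "n > 0" and v: "coprime (gcd a b) n"
  shows "card (primitive_vectors n \<inter> cyc n a b) = totient n"
proof -
  have "(\<lambda>k. k mod n) ` totatives n \<subseteq> {..<n}"
    using n by auto
  then have "inj_on (multiple n a b \<circ> (\<lambda>k. k mod n)) (totatives n)"
    using inj_on_multiple[OF v] inj_on_mod_totatives by (blast intro: comp_inj_on inj_on_subset)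
  then have "inj_on (multiple n a b) (totatives n)"
    by (simp add: comp_def multiple_mod)
  then show ?thesis
    by (simp add: primitive_vectors_inter_cyc[OF n v] card_image totient_def)
qed

subsection \<open>Lines\<close>

definition line :: "nat \<Rightarrow> nat \<times> nat \<Rightarrow> nat \<times> nat \<Rightarrow> (nat \<times> nat) set" where
  "line n p v = vadd n p ` cyc n (fst v) (snd v)"

lemma lines_eq_image:
  assumes n: "n > 0"
  shows "lines n = case_prod (line n) ` (({..<n} \<times> {..<n}) \<times> primitive_vectors n)"
    (is "_ = ?image")
proof -
  have vadd_eq: "(\<lambda>(u, v). ((x + u) mod n, (y + v) mod n)) = vadd n (x, y)" for x y
    by (auto simp: vadd_def)
  show ?thesis
  proof (intro subset_antisym subsetI)
    fix L
    assume "L \<in> lines n"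
    then obtain x y a b where "x < n" "y < n" "(a, b) \<in> primitive_vectors n"
      "L = line n (x, y) (a, b)"
      unfolding lines_def vadd_eq line_def primitive_vectors_def
      using card_cyc_eq_iff[OF n] by auto
    then show "L \<in> ?image"
      by (intro image_eqI[of _ _ "((x, y), (a, b))"]) auto
  next
    fix L
    assume "L \<in> ?image"
    then obtain x y a b where "x < n" "y < n" "a < n" "b < n" "coprime (gcd a b) n"
      "L = vadd n (x, y) ` cyc n a b"
      by (auto simp: line_def primitive_vectors_def)
    then show "L \<in> lines n"
      unfolding lines_def vadd_eq using card_cyc[OF n] by blast
  qed
qed

lemma line_subset_square: "n > 0 \<Longrightarrow> line n p v \<subseteq> {..<n} \<times> {..<n}"
  by (auto simp: line_def vadd_def)

text \<open>A line determines its direction: x + H' = y + H forces x \<in> y + H, and then H' = H since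
translating H by an element of H gives H back.\<close>

lemma cyc_eq_of_vadd_image_eq:
  assumes n: "n > 0" and v: "coprime (gcd a b) n" and p: "p \<in> {..<n} \<times> {..<n}"
    and eq: "vadd n p ` cyc n c d = vadd n p0 ` cyc n a b"
  shows "cyc n c d = cyc n a b"
proof -
  let ?H = "cyc n a b" and ?H' = "cyc n c d"
  have inj_image_iff: "vadd n q ` A = vadd n q ` B \<longleftrightarrow> A = B"
    if "A \<subseteq> {..<n} \<times> {..<n}" "B \<subseteq> {..<n} \<times> {..<n}" for q A B
    using inj_on_image_eq_iff[OF inj_on_vadd that] .
  have "p \<in> vadd n p ` ?H'"
    by (rule image_eqI[of _ "vadd n p" "(0, 0)"]) (simp_all add: vadd_zero_right[OF p] zero_in_cyc)
  then obtain h where h: "h \<in> ?H" "p = vadd n p0 h"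
    using eq by auto
  have "vadd n p0 ` (vadd n h ` ?H') = vadd n p0 ` ?H"
    using eq by (simp add: h(2) image_image vadd_assoc)
  moreover have "vadd n h ` ?H' \<subseteq> {..<n} \<times> {..<n}"
    using vadd_mem_square[OF n] by blast
  ultimately have "vadd n h ` ?H' = ?H"
    by (simp add: inj_image_iff cyc_subset_square[OF n])
  also have "\<dots> = vadd n h ` ?H"
    using vadd_cyc_eq[OF n v h(1)] by simp
  finally show ?thesis
    using cyc_subset_square[OF n] by (simp add: inj_image_iff)
qed

lemma mem_line_self: "p \<in> {..<n} \<times> {..<n} \<Longrightarrow> p \<in> line n p v"
  unfolding line_def
  by (rule image_eqI[of _ "vadd n p" "(0, 0)"]) (simp_all add: vadd_zero_right zero_in_cyc)

lemma line_eq_line_iff: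
  assumes n: "n > 0" and v0: "v0 \<in> primitive_vectors n"
    and p: "p \<in> {..<n} \<times> {..<n}" and v: "v \<in> primitive_vectors n"
  shows "line n p v = line n p0 v0 \<longleftrightarrow> p \<in> line n p0 v0 \<and> v \<in> cyc n (fst v0) (snd v0)"
proof -
  obtain a b c d where ab: "v0 = (a, b)" "coprime (gcd a b) n" and cd: "v = (c, d)"
    "c < n" "d < n" "coprime (gcd c d) n"
    using v0 v by (auto simp: primitive_vectors_def)
  show ?thesis
  proof
    assume eq: "line n p v = line n p0 v0"
    then have "vadd n p ` cyc n c d = vadd n p0 ` cyc n a b"
      by (simp add: line_def ab cd)
    then have "cyc n c d = cyc n a b"
      by (rule cyc_eq_of_vadd_image_eq[OF n ab(2) p])
    then show "p \<in> line n p0 v0 \<and> v \<in> cyc n (fst v0) (snd v0)"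
      using eq mem_line_self[OF p, of v] self_in_cyc[OF cd(2,3)] by (simp add: ab cd)
  next
    assume "p \<in> line n p0 v0 \<and> v \<in> cyc n (fst v0) (snd v0)"
    then obtain h where h: "h \<in> cyc n a b" "p = vadd n p0 h" and "(c, d) \<in> cyc n a b"
      by (auto simp: line_def ab cd)
    then have "cyc n c d = cyc n a b"
      using cyc_eq_of_mem[OF n ab(2) cd(4)] by simp
    then have "line n p v = vadd n p0 ` (vadd n h ` cyc n a b)"
      by (simp add: line_def cd h(2) image_image vadd_assoc)
    also have "\<dots> = line n p0 v0"
      by (simp add: vadd_cyc_eq[OF n ab(2) h(1)] line_def ab)
    finally show "line n p v = line n p0 v0" .
  qed
qed

lemma card_line_fibre:
  assumes n: "n > 0" and v0: "v0 \<in> primitive_vectors n"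
  shows "card {z \<in> ({..<n} \<times> {..<n}) \<times> primitive_vectors n. case_prod (line n) z = line n p0 v0}
    = n * totient n"
proof -
  obtain a b where ab: "v0 = (a, b)" "coprime (gcd a b) n"
    using v0 by (auto simp: primitive_vectors_def)
  have "{z \<in> ({..<n} \<times> {..<n}) \<times> primitive_vectors n. case_prod (line n) z = line n p0 v0}
      = line n p0 v0 \<times> (primitive_vectors n \<inter> cyc n a b)"
  proof (rule Set.set_eqI)
    fix z :: "(nat \<times> nat) \<times> nat \<times> nat"
    obtain p v where z: "z = (p, v)"
      by (rule prod.exhaust)
    show "z \<in> {z \<in> ({..<n} \<times> {..<n}) \<times> primitive_vectors n. case_prod (line n) z = line n p0 v0}
        \<longleftrightarrow> z \<in> line n p0 v0 \<times> (primitive_vectors n \<inter> cyc n a b)"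
      using line_eq_line_iff[OF n v0, of p v p0] line_subset_square[OF n, of p0 v0]
      unfolding z ab by auto
  qed
  moreover have "card (line n p0 v0) = n"
    using card_image[OF inj_on_subset[OF inj_on_vadd cyc_subset_square[OF n]]]
    by (simp add: line_def ab card_cyc[OF n])
  ultimately show ?thesis
    by (simp add: card_cartesian_product card_primitive_vectors_inter_cyc[OF n ab(2)])
qed

lemma card_lines_times_n_totient:
  assumes n: "n > 0"
  shows "card (lines n) * (n * totient n) = n * n * card (primitive_vectors n)"
proof -
  let ?A = "({..<n} \<times> {..<n}) \<times> primitive_vectors n"
  have "card ?A = card (case_prod (line n) ` ?A) * (n * totient n)"
  proof (rule card_eq_card_image_mult_fibre)
    show "finite ?A"
      by (simp add: finite_primitive_vectors)
    fix z
    assume "z \<in> ?A"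
    then obtain p v where "z = (p, v)" "v \<in> primitive_vectors n"
      by auto
    then show "card {y \<in> ?A. case_prod (line n) y = case_prod (line n) z} = n * totient n"
      using card_line_fibre[OF n] by simp
  qed
  then have "card (lines n) * (n * totient n) = card ?A"
    by (simp add: lines_eq_image[OF n])
  also have "\<dots> = n * n * card (primitive_vectors n)"
    by (simp add: card_cartesian_product)
  finally show ?thesis .
qed

subsection \<open>The number of vectors of order n\<close>

lemma bij_betw_mod_mod:
  fixes m1 m2 :: nat
  assumes "coprime m1 m2" "m1 > 0" "m2 > 0"
  shows "bij_betw (\<lambda>x. (x mod m1, x mod m2)) {..<m1 * m2} ({..<m1} \<times> {..<m2})"
proof -
  let ?crt = "\<lambda>x. (x mod m1, x mod m2)"
  have inj: "inj_on ?crt {..<m1 * m2}"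
  proof (rule inj_onI)
    fix x y
    assume "x \<in> {..<m1 * m2}" "y \<in> {..<m1 * m2}" "?crt x = ?crt y"
    moreover from this have "[x = y] (mod m1 * m2)"
      using assms(1) by (intro coprime_cong_mult_nat) (simp_all add: cong_def)
    ultimately show "x = y"
      by (simp add: cong_less_modulus_unique_nat)
  qed
  moreover have "?crt ` {..<m1 * m2} \<subseteq> {..<m1} \<times> {..<m2}"
    using assms by auto
  moreover have "card (?crt ` {..<m1 * m2}) = card ({..<m1} \<times> {..<m2})"
    by (simp add: card_image[OF inj] card_cartesian_product)
  ultimately show ?thesis
    unfolding bij_betw_def by (simp add: card_subset_eq)
qed

lemma card_primitive_vectors_mult:
  fixes m1 m2 :: nat
  assumes "coprime m1 m2" "m1 > 0" "m2 > 0"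
  shows "card (primitive_vectors (m1 * m2)) =
    card (primitive_vectors m1) * card (primitive_vectors m2)"
proof -
  let ?crt = "\<lambda>x. (x mod m1, x mod m2)"
  let ?F = "\<lambda>(a, b). ((a mod m1, b mod m1), (a mod m2, b mod m2))"
  have bij: "bij_betw ?crt {..<m1 * m2} ({..<m1} \<times> {..<m2})"
    using assms by (rule bij_betw_mod_mod)
  have inj: "inj_on ?F (primitive_vectors (m1 * m2))"
  proof (rule inj_onI)
    fix z w
    assume "z \<in> primitive_vectors (m1 * m2)" "w \<in> primitive_vectors (m1 * m2)" "?F z = ?F w"
    moreover obtain a b c d where "z = (a, b)" "w = (c, d)"
      by (cases z, cases w)
    ultimately have "a \<in> {..<m1 * m2}" "c \<in> {..<m1 * m2}" "?crt a = ?crt c"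
      "b \<in> {..<m1 * m2}" "d \<in> {..<m1 * m2}" "?crt b = ?crt d"
      by (auto simp: primitive_vectors_def)
    with \<open>z = (a, b)\<close> \<open>w = (c, d)\<close> show "z = w"
      using inj_onD[OF bij_betw_imp_inj_on[OF bij]] by metis
  qed
  moreover have "?F ` primitive_vectors (m1 * m2) = primitive_vectors m1 \<times> primitive_vectors m2"
  proof (intro subset_antisym subsetI)
    fix z
    assume "z \<in> ?F ` primitive_vectors (m1 * m2)"
    then show "z \<in> primitive_vectors m1 \<times> primitive_vectors m2"
      using assms by (auto simp: primitive_vectors_def coprime_gcd_mod_iff)
  next
    fix z
    assume "z \<in> primitive_vectors m1 \<times> primitive_vectors m2"
    then obtain a b c d where z: "z = ((a, b), (c, d))"
      and prim: "(a, b) \<in> primitive_vectors m1" "(c, d) \<in> primitive_vectors m2"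
      by auto
    then have "(a, c) \<in> ?crt ` {..<m1 * m2}" "(b, d) \<in> ?crt ` {..<m1 * m2}"
      using bij by (auto simp: bij_betw_def primitive_vectors_def)
    then obtain x y where "x < m1 * m2" "?crt x = (a, c)" "y < m1 * m2" "?crt y = (b, d)"
      by blast
    with prim show "z \<in> ?F ` primitive_vectors (m1 * m2)"
      unfolding z
      by (intro image_eqI[of _ _ "(x, y)"]) (auto simp: primitive_vectors_def coprime_gcd_mod_iff)
  qed
  ultimately show ?thesis
    using card_image[OF inj] by (simp add: card_cartesian_product)
qed

lemma card_primitive_vectors_prime_power:
  fixes p :: nat
  assumes p: "prime p" and e: "e > 0"
  shows "card (primitive_vectors (p ^ e)) = p ^ (2 * (e - 1)) * (p\<^sup>2 - 1)"
proof -
  let ?q = "p ^ (e - 1)"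
  let ?multiples = "(*) p ` {..<?q}"
  have pe: "p ^ e = p * ?q"
    using e by (simp add: power_eq_if)
  have "coprime p (gcd a b) \<longleftrightarrow> \<not> p dvd gcd a b" for a b
    using p by (auto intro: prime_imp_coprime dest: coprime_common_divisor not_prime_unit)
  then have coprime_iff: "coprime (gcd a b) p \<longleftrightarrow> \<not> (p dvd a \<and> p dvd b)" for a b
    by (simp add: ac_simps)
  have multiples: "{a. a < p ^ e \<and> p dvd a} = ?multiples"
    using p by (auto simp: pe prime_gt_0_nat elim!: dvdE)
  have "primitive_vectors (p ^ e) = {..<p ^ e} \<times> {..<p ^ e} - ?multiples \<times> ?multiples"
    using e multiples by (auto simp: primitive_vectors_def coprime_iff)
  moreover have "?multiples \<times> ?multiples \<subseteq> {..<p ^ e} \<times> {..<p ^ e}"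
    using multiples by blast
  moreover have "card ?multiples = ?q"
    using p by (simp add: card_image inj_on_def prime_gt_0_nat)
  ultimately have "card (primitive_vectors (p ^ e)) = (p * ?q) * (p * ?q) - ?q * ?q"
    by (simp add: card_Diff_subset card_cartesian_product pe)
  also have "\<dots> = ?q * ?q * (p\<^sup>2 - 1)"
    by (simp add: power2_eq_square algebra_simps diff_mult_distrib2)
  also have "?q * ?q = p ^ (2 * (e - 1))"
    by (simp add: power_mult power2_eq_square power_mult_distrib)
  finally show ?thesis .
qed

lemma multiplicative_prod_coprime:
  fixes f :: "nat \<Rightarrow> 'a :: comm_monoid_mult"
  assumes f1: "f 1 = 1"
    and mult: "\<And>m1 m2. coprime m1 m2 \<Longrightarrow> m1 > 0 \<Longrightarrow> m2 > 0 \<Longrightarrow> f (m1 * m2) = f m1 * f m2"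
    and "pairwise coprime (g ` A)" "inj_on g A" "\<And>a. a \<in> A \<Longrightarrow> g a > 0"
  shows "f (prod g A) = (\<Prod>a\<in>A. f (g a))"
  using assms(3-)
proof (induction A rule: infinite_finite_induct)
  case (insert x A)
  have "coprime (prod g A) (g x)"
  proof (rule prod_coprime_left)
    fix y
    assume "y \<in> A"
    with insert.hyps insert.prems(2) have "g y \<noteq> g x"
      using inj_onD[of g "insert x A" y x] by auto
    with \<open>y \<in> A\<close> show "coprime (g y) (g x)"
      using pairwiseD[OF insert.prems(1)] by auto
  qed
  then have "f (prod g A * g x) = f (prod g A) * f (g x)"
    using insert.prems(3) by (intro mult) (auto intro: prod_pos)
  then have "f (prod g (insert x A)) = f (prod g A) * f (g x)"
    using insert.hyps by (simp add: mult.commute)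
  also have "f (prod g A) = (\<Prod>a\<in>A. f (g a))"
    using insert.prems by (intro insert.IH) (auto dest: pairwise_subset)
  finally show ?case
    using insert.hyps by (simp add: mult.commute)
qed (use f1 in simp_all)

lemma multiplicative_prime_factorization:
  fixes f :: "nat \<Rightarrow> 'a :: comm_monoid_mult"
  assumes "f 1 = 1"
    and "\<And>m1 m2. coprime m1 m2 \<Longrightarrow> m1 > 0 \<Longrightarrow> m2 > 0 \<Longrightarrow> f (m1 * m2) = f m1 * f m2"
    and n: "n > 0"
  shows "f n = (\<Prod>p\<in>prime_factors n. f (p ^ multiplicity p n))"
proof -
  have "f n = f (\<Prod>p\<in>prime_factors n. p ^ multiplicity p n)"
    using prime_factorization_nat[OF n] by simp
  also have "\<dots> = (\<Prod>p\<in>prime_factors n. f (p ^ multiplicity p n))"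
  proof (rule multiplicative_prod_coprime[OF assms(1,2)])
    show "pairwise coprime ((\<lambda>p. p ^ multiplicity p n) ` prime_factors n)"
    proof (rule pairwiseI, clarify)
      fix p q
      assume "p \<in> prime_factors n" "q \<in> prime_factors n"
        "p ^ multiplicity p n \<noteq> q ^ multiplicity q n"
      then show "coprime (p ^ multiplicity p n) (q ^ multiplicity q n)"
        using primes_coprime[of p q] by (auto simp: prime_factors_multiplicity)
    qed
    show "inj_on (\<lambda>p. p ^ multiplicity p n) (prime_factors n)"
    proof (rule inj_onI)
      fix p q
      assume "p \<in> prime_factors n" "q \<in> prime_factors n"
        "p ^ multiplicity p n = q ^ multiplicity q n"
      then show "p = q"
        using prime_power_eq_imp_eq[of p q "multiplicity p n"]
        by (simp add: prime_factors_multiplicity)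
    qed
  qed (auto intro: prime_gt_0_nat)
  finally show ?thesis .
qed

lemma card_primitive_vectors:
  assumes "n > 0"
  shows "card (primitive_vectors n) =
    (\<Prod>p\<in>prime_factors n. p ^ (2 * (multiplicity p n - 1)) * (p\<^sup>2 - 1))"
proof -
  have "card (primitive_vectors 1) = 1"
    by (simp add: primitive_vectors_def)
  then have "card (primitive_vectors n) =
      (\<Prod>p\<in>prime_factors n. card (primitive_vectors (p ^ multiplicity p n)))"
    using card_primitive_vectors_mult assms by (rule multiplicative_prime_factorization)
  also have "\<dots> = (\<Prod>p\<in>prime_factors n. p ^ (2 * (multiplicity p n - 1)) * (p\<^sup>2 - 1))"
    by (intro prod.cong refl card_primitive_vectors_prime_power)
      (auto simp: prime_factors_multiplicity)
  finally show ?thesis .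
qed

lemma psi_square:
  assumes "n > 0"
  shows "psi (n\<^sup>2) = (\<Prod>p\<in>prime_factors n. (p + 1) * p ^ (2 * multiplicity p n - 1))"
proof -
  have "multiplicity p (n\<^sup>2) = 2 * multiplicity p n" if "p \<in> prime_factors n" for p
    using that assms by (intro prime_elem_multiplicity_power_distrib) auto
  then show ?thesis
    unfolding psi_def prime_factors_power[OF zero_less_numeral] by (intro prod.cong) simp_all
qed

lemma card_primitive_vectors_eq_psi_totient:
  assumes n: "n > 0"
  shows "n * card (primitive_vectors n) = psi (n\<^sup>2) * totient n"
proof -
  have euler_factor: "p ^ e * (p ^ (2 * (e - 1)) * (p\<^sup>2 - 1)) =
      (p + 1) * p ^ (2 * e - 1) * (p ^ (e - 1) * (p - 1))" if "e > 0" for p e :: nat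
  proof -
    obtain f where "e = Suc f"
      using \<open>e > 0\<close> gr0_implies_Suc by blast
    moreover have "p\<^sup>2 - 1 = (p + 1) * (p - 1)"
      by (simp add: power2_eq_square algebra_simps diff_mult_distrib2)
    ultimately show ?thesis
      by (simp add: algebra_simps power_add power2_eq_square)
  qed
  have "n * card (primitive_vectors n) = (\<Prod>p\<in>prime_factors n.
      p ^ multiplicity p n * (p ^ (2 * (multiplicity p n - 1)) * (p\<^sup>2 - 1)))"
    by (subst (1) prime_factorization_nat[OF n])
      (simp add: card_primitive_vectors[OF n] prod.distrib)
  also have "\<dots> = (\<Prod>p\<in>prime_factors n.
      (p + 1) * p ^ (2 * multiplicity p n - 1) * (p ^ (multiplicity p n - 1) * (p - 1)))"
    by (intro prod.cong refl euler_factor) (simp add: prime_factors_multiplicity)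
  also have "\<dots> = psi (n\<^sup>2) * totient n"
    by (simp add: psi_square[OF n] totient_formula1[OF n] prod.distrib)
  finally show ?thesis .
qed

theorem mainTheorem7:
  fixes n :: nat
  assumes "n \<ge> 1"
  shows "card (lines n) = psi (n ^ 2)"
proof -
  have n: "n > 0"
    using assms by simp
  have "card (lines n) * (n * totient n) = n * (n * card (primitive_vectors n))"
    using card_lines_times_n_totient[OF n] by (simp add: mult.assoc)
  also have "\<dots> = psi (n\<^sup>2) * (n * totient n)"
    by (simp add: card_primitive_vectors_eq_psi_totient[OF n] algebra_simps)
  finally show ?thesis
    using n by simp
qed

end
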